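(* Let $n\ge 1$ and let $U\in\mathcal{C}_2^{(n)}$ be a Clifford unitary with Pauli periodicity $m\ge 1$. Then the controlled gate $CU$ lies strictly in level $m+2$ of the $(n+1)$-qubit Clifford hierarchy: $$CU\in\mathcal{C}_{m+2}^{(n+1)}\setminus\mathcal{C}_{m+1}^{(n+1)}.$$
   Context: The $n$-qubit Pauli group is $\mathcal{P}_n=\{\omega P_1\otimes\cdots\otimes P_n:\ \omega\in\{\pm1,\pm \mathrm{i}\},\ P_j\in\{I,X,Y,Z\}\}$. The Clifford hierarchy: $\mathcal{C}_1^{(n)}:=\mathcal{P}_n$, $\mathcal{C}_{k+1}^{(n)}:=\{U\in U(2^n):\ UPU^\dagger\in\mathcal{C}_k^{(n)}\ \forall P\in\mathcal{P}_n\}$; $\mathcal{C}_2^{(n)}$ is the Clifford group. For $U\in U(2^n)$, the controlled gate is $CU:=\ket{0}\!\bra{0}\otimes I_{2^n}+\ket{1}\!\bra{1}\otimes U\in U(2^{n+1})$ (first qubit is the control). A unitary $U$ is Pauli-periodic if $U^{2^t}\in\mathcal{P}_n$ for some integer $t\ge0$, and its Pauli periodicity is $m=\min\{t\ge 0:\ U^{2^t}\in\mathcal{P}_n\}$ (membership in $\mathcal{P}_n$ exactly, i.e. with phase in $\{\pm1,\pm\mathrm{i}\}$). *)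

theory Defs
  imports Complex_Main "Jordan_Normal_Form.Matrix"
begin

definition dag :: "complex mat \<Rightarrow> complex mat" where
  "dag A = mat (dim_col A) (dim_row A) (\<lambda>(i,j). cnj (A $$ (j,i)))"

definition unitary_n :: "nat \<Rightarrow> complex mat \<Rightarrow> bool" where
  "unitary_n n U \<longleftrightarrow> U \<in> carrier_mat (2^n) (2^n) \<and> U * dag U = 1\<^sub>m (2^n) \<and> dag U * U = 1\<^sub>m (2^n)"

(* Kronecker (tensor) product; the first factor is the most significant one *)
definition kron :: "complex mat \<Rightarrow> complex mat \<Rightarrow> complex mat" where
  "kron A B = mat (dim_row A * dim_row B) (dim_col A * dim_col B)
     (\<lambda>(i,j). A $$ (i div dim_row B, j div dim_col B) * B $$ (i mod dim_row B, j mod dim_col B))"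

(* single-qubit Paulis: 0 = I, 1 = X, 2 = Y, 3 = Z *)
definition pauli1 :: "nat \<Rightarrow> complex mat" where
  "pauli1 k = (if k = 0 then mat_of_rows_list 2 [[1, 0], [0, 1]]
          else if k = 1 then mat_of_rows_list 2 [[0, 1], [1, 0]]
          else if k = 2 then mat_of_rows_list 2 [[0, -\<i>], [\<i>, 0]]
          else mat_of_rows_list 2 [[1, 0], [0, -1]])"

definition pauli_string :: "nat list \<Rightarrow> complex mat" where
  "pauli_string ps = foldr (\<lambda>p M. kron (pauli1 p) M) ps (1\<^sub>m 1)"

definition pauli_group :: "nat \<Rightarrow> complex mat set" where
  "pauli_group n = {\<omega> \<cdot>\<^sub>m pauli_string ps | \<omega> ps.
      \<omega> \<in> {1, -1, \<i>, -\<i>} \<and> length ps = n \<and> set ps \<subseteq> {0,1,2,3}}"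

(* Clifford hierarchy: clifford_hierarchy n k = C_k^(n) for k \<ge> 1 (level 0 is unused, empty) *)
fun clifford_hierarchy :: "nat \<Rightarrow> nat \<Rightarrow> complex mat set" where
  "clifford_hierarchy n 0 = {}"
| "clifford_hierarchy n (Suc 0) = pauli_group n"
| "clifford_hierarchy n (Suc (Suc k)) =
     {U. unitary_n n U \<and> (\<forall>P \<in> pauli_group n. U * P * dag U \<in> clifford_hierarchy n (Suc k))}"

(* controlled gate |0><0| \<otimes> I + |1><1| \<otimes> U, first qubit is the control *)
definition controlled :: "complex mat \<Rightarrow> complex mat" where
  "controlled U = four_block_mat (1\<^sub>m (dim_row U)) (0\<^sub>m (dim_row U) (dim_col U))
                                 (0\<^sub>m (dim_row U) (dim_col U)) U"

definition pauli_periodic :: "nat \<Rightarrow> complex mat \<Rightarrow> bool" where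
  "pauli_periodic n U \<longleftrightarrow> (\<exists>t. U ^\<^sub>m (2^t) \<in> pauli_group n)"

definition pauli_periodicity :: "nat \<Rightarrow> complex mat \<Rightarrow> nat" where
  "pauli_periodicity n U = (LEAST t. U ^\<^sub>m (2^t) \<in> pauli_group n)"

end

theory Submission
  imports Defs
begin

(* Write CV = diag(I, V) and X for the Pauli X on the control qubit. Conjugating X by CV gives
   X diag(V, V^dagger), and every (n+1)-qubit Pauli is diag(Q, +-Q) or X diag(Q, +-Q) for an n-qubit
   Pauli Q. For a Clifford V and k >= 2 this shows that CV lies in level k+1 of the hierarchy iff
   diag(V, V^dagger) lies in level k. The latter differs from diag(V^2, I) by the commuting Clifford
   I (x) V, and diag(V^2, I) is conjugate to C(V^2) under X; so CV is in level k+1 iff C(V^2) is in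
   level k. At the bottom, CV is Clifford iff V is a Pauli. By induction, CV is in level t+2 iff
   V^(2^t) is a Pauli, and the theorem follows from t = m and t = m-1. *)

lemma smult_smult_mat [simp]: "a \<cdot>\<^sub>m (b \<cdot>\<^sub>m A) = (a * b) \<cdot>\<^sub>m (A :: 'a :: semigroup_mult mat)"
  by (rule eq_matI) (auto simp: mult.assoc)

lemma one_smult_mat [simp]: "(1 :: 'a :: monoid_mult) \<cdot>\<^sub>m A = A"
  by (rule eq_matI) auto

lemma zero_smult_mat: "(0 :: 'a :: semiring_0) \<cdot>\<^sub>m A = 0\<^sub>m (dim_row A) (dim_col A)"
  by (rule eq_matI) auto

lemma smult_mult_mat_left [simp]:
  "dim_col A = dim_row B \<Longrightarrow> (k \<cdot>\<^sub>m A) * B = k \<cdot>\<^sub>m (A * (B :: 'a :: comm_semiring_0 mat))"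
  by (rule eq_matI) (auto simp: scalar_prod_def sum_distrib_left ac_simps)

lemma smult_mult_mat_right [simp]:
  "dim_col A = dim_row B \<Longrightarrow> A * (k \<cdot>\<^sub>m B) = k \<cdot>\<^sub>m (A * (B :: 'a :: comm_semiring_0 mat))"
  by (rule eq_matI) (auto simp: scalar_prod_def sum_distrib_left ac_simps)

lemma mult_carrier_square_mat [simp]:
  "A \<in> carrier_mat N N \<Longrightarrow> B \<in> carrier_mat N N \<Longrightarrow> A * B \<in> carrier_mat N N"
  by (rule mult_carrier_mat)

lemma dim_dag [simp]: "dim_row (dag A) = dim_col A" "dim_col (dag A) = dim_row A"
  unfolding dag_def by auto

lemma index_dag [simp]: "i < dim_col A \<Longrightarrow> j < dim_row A \<Longrightarrow> dag A $$ (i, j) = cnj (A $$ (j, i))"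
  unfolding dag_def by auto

lemma dag_carrier_mat [simp]: "A \<in> carrier_mat r c \<Longrightarrow> dag A \<in> carrier_mat c r"
  unfolding carrier_mat_def by auto

lemma dag_dag [simp]: "dag (dag A) = A"
  by (rule eq_matI) auto

lemma dag_smult [simp]: "dag (a \<cdot>\<^sub>m A) = cnj a \<cdot>\<^sub>m dag A"
  by (rule eq_matI) auto

lemma dag_one [simp]: "dag (1\<^sub>m n) = 1\<^sub>m n"
  by (rule eq_matI) auto

lemma dag_mult:
  assumes "A \<in> carrier_mat r k" "B \<in> carrier_mat k c"
  shows "dag (A * B) = dag B * dag A"
  using assms by (intro eq_matI) (auto simp: scalar_prod_def cnj_sum mult.commute)

lemma dag_four_block_mat:
  assumes "A \<in> carrier_mat r1 c1" "B \<in> carrier_mat r1 c2" "C \<in> carrier_mat r2 c1" "D \<in> carrier_mat r2 c2"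
  shows "dag (four_block_mat A B C D) = four_block_mat (dag A) (dag C) (dag B) (dag D)"
  using assms by (intro eq_matI) auto

lemma unitary_nD:
  assumes "unitary_n n U"
  shows "U \<in> carrier_mat (2^n) (2^n)" "U * dag U = 1\<^sub>m (2^n)" "dag U * U = 1\<^sub>m (2^n)"
  using assms unfolding unitary_n_def by auto

lemma unitary_n_mult:
  assumes "unitary_n n A" "unitary_n n B"
  shows "unitary_n n (A * B)"
proof -
  note A = unitary_nD[OF assms(1)] and B = unitary_nD[OF assms(2)]
  let ?N = "2^n :: nat"
  have "A * B * dag (A * B) = A * (B * dag B) * dag A"
    using A(1) B(1) by (simp add: dag_mult[OF A(1) B(1)] assoc_mult_mat[of _ ?N ?N _ ?N _ ?N])
  moreover have "dag (A * B) * (A * B) = dag B * (dag A * A) * B"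
    using A(1) B(1) by (simp add: dag_mult[OF A(1) B(1)] assoc_mult_mat[of _ ?N ?N _ ?N _ ?N])
  ultimately show ?thesis
    using A B unfolding unitary_n_def by simp
qed

lemma unitary_n_dag: "unitary_n n A \<Longrightarrow> unitary_n n (dag A)"
  unfolding unitary_n_def by auto

lemma unitary_n_cancel:
  assumes "unitary_n n U" "M \<in> carrier_mat (2 ^ n) (2 ^ n)"
  shows "dag U * (U * M) = M" "U * (dag U * M) = M"
  using unitary_nD[OF assms(1)] assms(2)
  by (simp_all flip: assoc_mult_mat[of _ "2 ^ n" "2 ^ n" _ "2 ^ n" _ "2 ^ n"])

definition pauli_phases :: "complex set" where
  "pauli_phases = {1, -1, \<i>, -\<i>}"

lemma pauli_phases_simps [simp]: "1 \<in> pauli_phases" "-1 \<in> pauli_phases" "\<i> \<in> pauli_phases" "-\<i> \<in> pauli_phases"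
  unfolding pauli_phases_def by auto

lemma pauli_phases_mult: "a \<in> pauli_phases \<Longrightarrow> b \<in> pauli_phases \<Longrightarrow> a * b \<in> pauli_phases"
  unfolding pauli_phases_def by auto

lemma pauli_phases_mult_cnj: "a \<in> pauli_phases \<Longrightarrow> a * cnj a = 1"
  unfolding pauli_phases_def by auto

lemma pauli_phases_cnj_sign: "a \<in> pauli_phases \<Longrightarrow> \<exists>s \<in> {1, -1}. cnj a = s * a"
  unfolding pauli_phases_def by auto

lemma finite_pauli_phases: "finite pauli_phases"
  unfolding pauli_phases_def by simp

lemma less_2_cases: "(i :: nat) < 2 \<longleftrightarrow> i = 0 \<or> i = 1"
  by auto

lemma less_4_cases: "(a :: nat) < 4 \<longleftrightarrow> a = 0 \<or> a = 1 \<or> a = 2 \<or> a = 3"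
  by auto

lemma pauli1_carrier_mat [simp]: "pauli1 a \<in> carrier_mat 2 2"
  unfolding pauli1_def by (auto simp: mat_of_rows_list_def)

lemma dim_pauli1 [simp]: "dim_row (pauli1 a) = 2" "dim_col (pauli1 a) = 2"
  using pauli1_carrier_mat by blast+

definition pauli1_entry :: "nat \<Rightarrow> nat \<Rightarrow> nat \<Rightarrow> complex" where
  "pauli1_entry a i j =
     (if a = 0 then (if i = j then 1 else 0)
      else if a = 1 then (if i = j then 0 else 1)
      else if a = 2 then (if i = j then 0 else if i = 0 then -\<i> else \<i>)
      else (if i = j then (if i = 0 then 1 else -1) else 0))"

lemma index_pauli1 [simp]: "i < 2 \<Longrightarrow> j < 2 \<Longrightarrow> pauli1 a $$ (i, j) = pauli1_entry a i j"
  unfolding pauli1_def pauli1_entry_def by (auto simp: mat_of_rows_list_def less_2_cases)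

lemma eq_mat_2I:
  "A \<in> carrier_mat 2 2 \<Longrightarrow> B \<in> carrier_mat 2 2 \<Longrightarrow>
   (\<And>i j. i < 2 \<Longrightarrow> j < 2 \<Longrightarrow> A $$ (i, j) = B $$ (i, j)) \<Longrightarrow> A = B"
  by (rule eq_matI) auto

lemma index_mult_mat_2:
  "A \<in> carrier_mat 2 2 \<Longrightarrow> B \<in> carrier_mat 2 2 \<Longrightarrow> i < 2 \<Longrightarrow> j < 2 \<Longrightarrow>
   (A * B) $$ (i, j) = A $$ (i, 0) * B $$ (0, j) + A $$ (i, 1) * B $$ (1, j)"
  by (auto simp: scalar_prod_def numeral_2_eq_2)

(* The label of a product of two Paulis is the bitwise XOR of the labels. *)

definition pauli1_prod_label :: "nat \<Rightarrow> nat \<Rightarrow> nat" where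
  "pauli1_prod_label a b = (if a = 0 then b else if b = 0 then a else if a = b then 0 else 6 - a - b)"

definition pauli1_prod_phase :: "nat \<Rightarrow> nat \<Rightarrow> complex" where
  "pauli1_prod_phase a b =
     (if a = 0 \<or> b = 0 \<or> a = b then 1 else if (a, b) \<in> {(1, 2), (2, 3), (3, 1)} then \<i> else -\<i>)"

lemma pauli1_prod_label_less: "a < 4 \<Longrightarrow> b < 4 \<Longrightarrow> pauli1_prod_label a b < 4"
  unfolding pauli1_prod_label_def by auto

lemma pauli1_prod_label_commute: "pauli1_prod_label a b = pauli1_prod_label b a"
  unfolding pauli1_prod_label_def by auto

lemma pauli1_prod_phase_in_phases: "pauli1_prod_phase a b \<in> pauli_phases"
  unfolding pauli1_prod_phase_def by auto

lemma pauli1_mult: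
  assumes "a < 4" "b < 4"
  shows "pauli1 a * pauli1 b = pauli1_prod_phase a b \<cdot>\<^sub>m pauli1 (pauli1_prod_label a b)"
proof (rule eq_mat_2I)
  fix i j :: nat
  assume ij: "i < 2" "j < 2"
  have "(pauli1 a * pauli1 b) $$ (i, j) =
        pauli1_entry a i 0 * pauli1_entry b 0 j + pauli1_entry a i 1 * pauli1_entry b 1 j"
    using ij by (subst index_mult_mat_2) auto
  also have "\<dots> = pauli1_prod_phase a b * pauli1_entry (pauli1_prod_label a b) i j"
    using assms ij unfolding less_2_cases less_4_cases
    by (elim disjE) (simp_all add: pauli1_entry_def pauli1_prod_phase_def pauli1_prod_label_def)
  finally show "(pauli1 a * pauli1 b) $$ (i, j) =
      (pauli1_prod_phase a b \<cdot>\<^sub>m pauli1 (pauli1_prod_label a b)) $$ (i, j)"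
    using ij by simp
qed auto

lemma pauli1_commute_sign:
  assumes "a < 4" "b < 4"
  shows "\<exists>s \<in> {1, -1}. pauli1 a * pauli1 b = s \<cdot>\<^sub>m (pauli1 b * pauli1 a)"
proof -
  define s :: complex where "s = (if a = 0 \<or> b = 0 \<or> a = b then 1 else -1)"
  have "pauli1_prod_phase a b = s * pauli1_prod_phase b a"
    using assms unfolding s_def pauli1_prod_phase_def by auto
  then have "pauli1 a * pauli1 b = s \<cdot>\<^sub>m (pauli1 b * pauli1 a)"
    using assms by (simp add: pauli1_mult pauli1_prod_label_commute)
  then show ?thesis
    unfolding s_def by auto
qed

lemma pauli1_0: "pauli1 0 = 1\<^sub>m 2"
  by (rule eq_mat_2I) (auto simp: less_2_cases pauli1_entry_def)

lemma pauli1_mult_self: "a < 4 \<Longrightarrow> pauli1 a * pauli1 a = 1\<^sub>m 2"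
  by (simp add: pauli1_mult pauli1_prod_phase_def pauli1_prod_label_def pauli1_0)

lemma dag_pauli1 [simp]: "dag (pauli1 a) = pauli1 a"
  by (rule eq_mat_2I) (auto simp: less_2_cases pauli1_entry_def)

lemma dim_kron [simp]:
  "dim_row (kron A B) = dim_row A * dim_row B" "dim_col (kron A B) = dim_col A * dim_col B"
  unfolding kron_def by auto

lemma kron_carrier_mat [simp]:
  "A \<in> carrier_mat r1 c1 \<Longrightarrow> B \<in> carrier_mat r2 c2 \<Longrightarrow> kron A B \<in> carrier_mat (r1 * r2) (c1 * c2)"
  by auto

lemma index_kron [simp]:
  "i < dim_row A * dim_row B \<Longrightarrow> j < dim_col A * dim_col B \<Longrightarrow>
   kron A B $$ (i, j) = A $$ (i div dim_row B, j div dim_col B) * B $$ (i mod dim_row B, j mod dim_col B)"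
  unfolding kron_def by auto

lemma kron_smult_left [simp]: "kron (c \<cdot>\<^sub>m A) B = c \<cdot>\<^sub>m kron A B"
  by (rule eq_matI) (auto simp: less_mult_imp_div_less)

lemma kron_smult_right [simp]: "kron A (c \<cdot>\<^sub>m B) = c \<cdot>\<^sub>m kron A B"
proof (rule eq_matI)
  fix i j
  assume "i < dim_row (c \<cdot>\<^sub>m kron A B)" "j < dim_col (c \<cdot>\<^sub>m kron A B)"
  then have "0 < dim_row B" "0 < dim_col B"
    by (auto intro: gr0I)
  with \<open>i < _\<close> \<open>j < _\<close> show "kron A (c \<cdot>\<^sub>m B) $$ (i, j) = (c \<cdot>\<^sub>m kron A B) $$ (i, j)"
    by (auto simp: less_mult_imp_div_less)
qed auto

lemma kron_one: "kron (1\<^sub>m a) (1\<^sub>m b) = 1\<^sub>m (a * b)"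
proof (rule eq_matI)
  fix i j
  assume "i < dim_row (1\<^sub>m (a * b))" "j < dim_col (1\<^sub>m (a * b))"
  then have ij: "i < a * b" "j < a * b" and "0 < b"
    by (auto intro: gr0I)
  moreover have "(i div b = j div b \<and> i mod b = j mod b) \<longleftrightarrow> i = j"
    by (metis div_mult_mod_eq)
  ultimately show "kron (1\<^sub>m a) (1\<^sub>m b) $$ (i, j) = 1\<^sub>m (a * b) $$ (i, j)"
    by (auto simp: less_mult_imp_div_less mult.commute)
qed auto

lemma kron_2_four_block:
  assumes A: "A \<in> carrier_mat 2 2" and B: "B \<in> carrier_mat N N"
  shows "kron A B = four_block_mat (A $$ (0, 0) \<cdot>\<^sub>m B) (A $$ (0, 1) \<cdot>\<^sub>m B)
                                   (A $$ (1, 0) \<cdot>\<^sub>m B) (A $$ (1, 1) \<cdot>\<^sub>m B)"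
    (is "_ = ?F")
proof (rule eq_matI)
  fix i j
  assume "i < dim_row ?F" "j < dim_col ?F"
  then have "i < N + N" "j < N + N"
    using B by auto
  moreover have "x < N + N \<Longrightarrow> \<not> x < N \<Longrightarrow> x div N = 1 \<and> x mod N = x - N" for x
    by (simp add: div_if mod_if)
  ultimately show "kron A B $$ (i, j) = ?F $$ (i, j)"
    using A B by (cases "i < N"; cases "j < N") auto
qed (use A B in auto)

lemma kron_2_mult:
  assumes A: "A \<in> carrier_mat 2 2" and C: "C \<in> carrier_mat 2 2"
    and B: "B \<in> carrier_mat N N" and D: "D \<in> carrier_mat N N"
  shows "kron A B * kron C D = kron (A * C) (B * D)"
proof -
  have "(a \<cdot>\<^sub>m (B * D)) + (b \<cdot>\<^sub>m (B * D)) = (a + b) \<cdot>\<^sub>m (B * D)" for a b :: complex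
    by (rule add_smult_distrib_right_mat[OF mult_carrier_square_mat[OF B D], symmetric])
  then show ?thesis
    unfolding kron_2_four_block[OF A B] kron_2_four_block[OF C D]
      kron_2_four_block[OF mult_carrier_mat[OF A C] mult_carrier_square_mat[OF B D]]
    using A B C D by (subst mult_four_block_mat[of _ N N _ N _ N _ _ N _ N])
      (simp_all add: index_mult_mat_2[OF A C] ac_simps del: index_mult_mat)
qed

lemma dag_kron_2:
  assumes A: "A \<in> carrier_mat 2 2" and B: "B \<in> carrier_mat N N"
  shows "dag (kron A B) = kron (dag A) (dag B)"
  unfolding kron_2_four_block[OF A B] kron_2_four_block[OF dag_carrier_mat[OF A] dag_carrier_mat[OF B]]
  using A B by (subst dag_four_block_mat[of _ N N]) auto

section \<open>The Pauli group\<close>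

abbreviation pauli_labels :: "nat list \<Rightarrow> bool" where
  "pauli_labels ps \<equiv> set ps \<subseteq> {0, 1, 2, 3}"

lemma pauli_string_Nil [simp]: "pauli_string [] = 1\<^sub>m 1"
  unfolding pauli_string_def by simp

lemma pauli_string_Cons [simp]: "pauli_string (p # ps) = kron (pauli1 p) (pauli_string ps)"
  unfolding pauli_string_def by simp

lemma pauli_string_carrier_mat [simp]:
  "pauli_string ps \<in> carrier_mat (2 ^ length ps) (2 ^ length ps)"
  by (induction ps) auto

lemma dim_pauli_string [simp]:
  "dim_row (pauli_string ps) = 2 ^ length ps" "dim_col (pauli_string ps) = 2 ^ length ps"
  using pauli_string_carrier_mat by blast+

lemma dag_pauli_string [simp]: "dag (pauli_string ps) = pauli_string ps"
  by (induction ps) (auto simp: dag_kron_2[OF pauli1_carrier_mat pauli_string_carrier_mat])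

lemma kron_pauli1_pauli_string_mult:
  assumes "length qs = length ps"
  shows "kron (pauli1 p) (pauli_string ps) * kron (pauli1 q) (pauli_string qs) =
         kron (pauli1 p * pauli1 q) (pauli_string ps * pauli_string qs)"
  using assms pauli_string_carrier_mat[of qs]
  by (simp add: kron_2_mult[OF pauli1_carrier_mat pauli1_carrier_mat pauli_string_carrier_mat])

lemma pauli_string_mult:
  assumes "length qs = length ps" "pauli_labels ps" "pauli_labels qs"
  shows "\<exists>c rs. c \<in> pauli_phases \<and> length rs = length ps \<and> pauli_labels rs \<and>
           pauli_string ps * pauli_string qs = c \<cdot>\<^sub>m pauli_string rs"
  using assms
proof (induction ps arbitrary: qs)
  case Nil
  then show ?case
    by (intro exI[of _ 1] exI[of _ "[]"]) auto
next
  case (Cons p ps)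
  then obtain q qs' where qs: "qs = q # qs'" and l: "length qs' = length ps"
    by (cases qs) auto
  from Cons.prems qs have pq: "p < 4" "q < 4" and labels: "pauli_labels ps" "pauli_labels qs'"
    by auto
  obtain c rs where
    c: "c \<in> pauli_phases" "length rs = length ps" "pauli_labels rs"
       "pauli_string ps * pauli_string qs' = c \<cdot>\<^sub>m pauli_string rs"
    using Cons.IH[OF l labels] by blast
  have "pauli_string (p # ps) * pauli_string qs =
        (pauli1_prod_phase p q * c) \<cdot>\<^sub>m pauli_string (pauli1_prod_label p q # rs)"
    using pq c by (simp add: qs kron_pauli1_pauli_string_mult[OF l] pauli1_mult ac_simps)
  moreover have "pauli1_prod_label p q \<in> {0, 1, 2, 3}"
    using pauli1_prod_label_less[OF pq] by auto
  ultimately show ?case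
    using c pauli_phases_mult[OF pauli1_prod_phase_in_phases c(1)]
    by (intro exI[of _ "pauli1_prod_phase p q * c"] exI[of _ "pauli1_prod_label p q # rs"]) auto
qed

lemma pauli_string_commute_sign:
  assumes "length qs = length ps" "pauli_labels ps" "pauli_labels qs"
  shows "\<exists>s \<in> {1, -1}. pauli_string ps * pauli_string qs = s \<cdot>\<^sub>m (pauli_string qs * pauli_string ps)"
  using assms
proof (induction ps arbitrary: qs)
  case Nil
  then show ?case by auto
next
  case (Cons p ps)
  then obtain q qs' where qs: "qs = q # qs'" and l: "length qs' = length ps"
    by (cases qs) auto
  from Cons.prems qs have pq: "p < 4" "q < 4" and labels: "pauli_labels ps" "pauli_labels qs'"
    by auto
  obtain s where s: "s \<in> {1, -1}"
    "pauli_string ps * pauli_string qs' = s \<cdot>\<^sub>m (pauli_string qs' * pauli_string ps)"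
    using Cons.IH[OF l labels] by blast
  from pauli1_commute_sign[OF pq] obtain t where t: "t \<in> {1, -1}"
    "pauli1 p * pauli1 q = t \<cdot>\<^sub>m (pauli1 q * pauli1 p)"
    by blast
  have "pauli_string (p # ps) * pauli_string qs =
        (t * s) \<cdot>\<^sub>m (pauli_string qs * pauli_string (p # ps))"
    using s t l by (simp add: qs kron_pauli1_pauli_string_mult ac_simps)
  then show ?case
    using s t by (intro bexI[of _ "t * s"]) auto
qed

lemma pauli_string_mult_self: "pauli_labels ps \<Longrightarrow> pauli_string ps * pauli_string ps = 1\<^sub>m (2 ^ length ps)"
  by (induction ps) (auto simp: kron_pauli1_pauli_string_mult pauli1_mult_self kron_one)

lemma pauli_string_replicate_0: "pauli_string (replicate n 0) = 1\<^sub>m (2 ^ n)"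
  by (induction n) (auto simp: pauli1_0 kron_one)

lemma pauli_group_iff:
  "P \<in> pauli_group n \<longleftrightarrow>
   (\<exists>\<omega> ps. P = \<omega> \<cdot>\<^sub>m pauli_string ps \<and> \<omega> \<in> pauli_phases \<and> length ps = n \<and> pauli_labels ps)"
  unfolding pauli_group_def pauli_phases_def by blast

lemma pauli_groupE:
  assumes "P \<in> pauli_group n"
  obtains \<omega> ps where "P = \<omega> \<cdot>\<^sub>m pauli_string ps" "\<omega> \<in> pauli_phases" "length ps = n" "pauli_labels ps"
  using assms unfolding pauli_group_iff by blast

lemma pauli_groupI:
  "\<omega> \<in> pauli_phases \<Longrightarrow> length ps = n \<Longrightarrow> pauli_labels ps \<Longrightarrow> \<omega> \<cdot>\<^sub>m pauli_string ps \<in> pauli_group n"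
  unfolding pauli_group_iff by blast

lemma pauli_group_carrier_mat: "P \<in> pauli_group n \<Longrightarrow> P \<in> carrier_mat (2 ^ n) (2 ^ n)"
  by (erule pauli_groupE) auto

lemma pauli_group_smult: "\<omega> \<in> pauli_phases \<Longrightarrow> P \<in> pauli_group n \<Longrightarrow> \<omega> \<cdot>\<^sub>m P \<in> pauli_group n"
  by (erule pauli_groupE) (auto intro!: pauli_groupI pauli_phases_mult)

lemma pauli_group_sign: "s \<in> {1, -1} \<Longrightarrow> P \<in> pauli_group n \<Longrightarrow> s \<cdot>\<^sub>m P \<in> pauli_group n"
  by (auto intro: pauli_group_smult)

lemma one_in_pauli_group: "1\<^sub>m (2 ^ n) \<in> pauli_group n"
  using pauli_groupI[of 1 "replicate n 0" n] by (simp add: pauli_string_replicate_0 set_replicate_conv_if)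

lemma pauli_group_mult:
  assumes "P \<in> pauli_group n" "Q \<in> pauli_group n"
  shows "P * Q \<in> pauli_group n"
proof -
  obtain a ps where P: "P = a \<cdot>\<^sub>m pauli_string ps" "a \<in> pauli_phases" "length ps = n" "pauli_labels ps"
    using assms(1) by (rule pauli_groupE)
  obtain b qs where Q: "Q = b \<cdot>\<^sub>m pauli_string qs" "b \<in> pauli_phases" "length qs = n" "pauli_labels qs"
    using assms(2) by (rule pauli_groupE)
  obtain c rs where R: "c \<in> pauli_phases" "length rs = length ps" "pauli_labels rs"
     "pauli_string ps * pauli_string qs = c \<cdot>\<^sub>m pauli_string rs"
    using pauli_string_mult[of qs ps] P Q by auto
  have "P * Q = (a * (b * c)) \<cdot>\<^sub>m pauli_string rs"
    using P Q R by (simp add: ac_simps)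
  then show ?thesis
    using P Q R by (auto intro!: pauli_groupI pauli_phases_mult)
qed

lemma pauli_group_dag_sign:
  assumes "P \<in> pauli_group n"
  shows "\<exists>s \<in> {1, -1}. dag P = s \<cdot>\<^sub>m P"
proof -
  obtain a ps where P: "P = a \<cdot>\<^sub>m pauli_string ps" "a \<in> pauli_phases"
    using assms by (rule pauli_groupE)
  obtain s where "s \<in> {1, -1}" "cnj a = s * a"
    using pauli_phases_cnj_sign[OF P(2)] by blast
  then show ?thesis
    using P by auto
qed

lemma pauli_group_dag: "P \<in> pauli_group n \<Longrightarrow> dag P \<in> pauli_group n"
  using pauli_group_dag_sign pauli_group_sign by metis

lemma pauli_group_unitary: "P \<in> pauli_group n \<Longrightarrow> unitary_n n P"
proof (erule pauli_groupE)
  fix \<omega> ps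
  assume P: "P = \<omega> \<cdot>\<^sub>m pauli_string ps" "\<omega> \<in> pauli_phases" "length ps = n" "pauli_labels ps"
  have "\<omega> * cnj \<omega> = 1" "cnj \<omega> * \<omega> = 1"
    using pauli_phases_mult_cnj[OF P(2)] by (auto simp: mult.commute)
  moreover have "P \<in> carrier_mat (2 ^ n) (2 ^ n)"
    using P by auto
  ultimately show "unitary_n n P"
    using P pauli_string_mult_self[OF P(4)] unfolding unitary_n_def by simp
qed

lemma pauli_group_commute_sign:
  assumes "P \<in> pauli_group n" "Q \<in> pauli_group n"
  shows "\<exists>s \<in> {1, -1}. P * Q = s \<cdot>\<^sub>m (Q * P)"
proof -
  obtain a ps where P: "P = a \<cdot>\<^sub>m pauli_string ps" "length ps = n" "pauli_labels ps"
    using assms(1) by (rule pauli_groupE)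
  obtain b qs where Q: "Q = b \<cdot>\<^sub>m pauli_string qs" "length qs = n" "pauli_labels qs"
    using assms(2) by (rule pauli_groupE)
  have "length qs = length ps"
    using P Q by simp
  then obtain s where "s \<in> {1, -1}" "pauli_string ps * pauli_string qs = s \<cdot>\<^sub>m (pauli_string qs * pauli_string ps)"
    using pauli_string_commute_sign P(3) Q(3) by blast
  then show ?thesis
    using P Q by (intro bexI[of _ s]) (simp_all add: ac_simps)
qed

lemma finite_pauli_group: "finite (pauli_group n)"
proof -
  have "pauli_group n \<subseteq> (\<lambda>(\<omega>, ps). \<omega> \<cdot>\<^sub>m pauli_string ps) ` (pauli_phases \<times> {ps. pauli_labels ps \<and> length ps = n})"
  proof
    fix P
    assume "P \<in> pauli_group n"
    then obtain \<omega> ps where "P = \<omega> \<cdot>\<^sub>m pauli_string ps" "\<omega> \<in> pauli_phases" "length ps = n" "pauli_labels ps"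
      by (rule pauli_groupE)
    then show "P \<in> (\<lambda>(\<omega>, ps). \<omega> \<cdot>\<^sub>m pauli_string ps) ` (pauli_phases \<times> {ps. pauli_labels ps \<and> length ps = n})"
      by (intro image_eqI[of _ _ "(\<omega>, ps)"]) auto
  qed
  moreover have "finite {ps. pauli_labels ps \<and> length ps = n}"
    by (rule finite_lists_length_eq) auto
  ultimately show ?thesis
    using finite_pauli_phases by (meson finite_SigmaI finite_imageI finite_subset)
qed

lemma pauli_group_Suc:
  "P \<in> pauli_group (Suc n) \<longleftrightarrow> (\<exists>a < 4. \<exists>Q \<in> pauli_group n. P = kron (pauli1 a) Q)"
proof
  assume "P \<in> pauli_group (Suc n)"
  then obtain \<omega> ps where P: "P = \<omega> \<cdot>\<^sub>m pauli_string ps" "\<omega> \<in> pauli_phases" "length ps = Suc n"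
    "pauli_labels ps"
    by (rule pauli_groupE)
  then obtain p ps' where "ps = p # ps'"
    by (cases ps) auto
  with P show "\<exists>a < 4. \<exists>Q \<in> pauli_group n. P = kron (pauli1 a) Q"
    by (intro exI[of _ p] conjI bexI[of _ "\<omega> \<cdot>\<^sub>m pauli_string ps'"] pauli_groupI) auto
next
  assume "\<exists>a < 4. \<exists>Q \<in> pauli_group n. P = kron (pauli1 a) Q"
  then obtain a Q where "a < 4" "Q \<in> pauli_group n" "P = kron (pauli1 a) Q"
    by blast
  moreover from \<open>Q \<in> pauli_group n\<close> obtain \<omega> ps where
    "Q = \<omega> \<cdot>\<^sub>m pauli_string ps" "\<omega> \<in> pauli_phases" "length ps = n" "pauli_labels ps"
    by (rule pauli_groupE)
  ultimately show "P \<in> pauli_group (Suc n)"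
    using pauli_groupI[of \<omega> "a # ps" "Suc n"] by (auto simp: less_4_cases)
qed

section \<open>The Clifford hierarchy\<close>

definition conj_mat :: "complex mat \<Rightarrow> complex mat \<Rightarrow> complex mat" where
  "conj_mat U A = U * A * dag U"

lemma conj_mat_carrier_mat [simp]:
  "U \<in> carrier_mat N N \<Longrightarrow> A \<in> carrier_mat N N \<Longrightarrow> conj_mat U A \<in> carrier_mat N N"
  unfolding conj_mat_def by simp

lemma conj_mat_mult:
  assumes "U \<in> carrier_mat N N" "V \<in> carrier_mat N N" "A \<in> carrier_mat N N"
  shows "conj_mat (U * V) A = conj_mat U (conj_mat V A)"
  unfolding conj_mat_def using assms by (simp add: dag_mult[of U N N V N] assoc_mult_mat[of _ N N _ N _ N])

lemma conj_mat_mult_distrib: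
  assumes "U \<in> carrier_mat N N" "dag U * U = 1\<^sub>m N" "A \<in> carrier_mat N N" "B \<in> carrier_mat N N"
  shows "conj_mat U (A * B) = conj_mat U A * conj_mat U B"
proof -
  have "conj_mat U A * conj_mat U B = U * A * (dag U * U) * B * dag U"
    unfolding conj_mat_def using assms(1,3,4) by (simp add: assoc_mult_mat[of _ N N _ N _ N])
  then show ?thesis
    unfolding conj_mat_def using assms by (simp add: assoc_mult_mat[of _ N N _ N _ N])
qed

lemma conj_mat_dag_cancel:
  assumes "U \<in> carrier_mat N N" "dag U * U = 1\<^sub>m N" "A \<in> carrier_mat N N"
  shows "conj_mat (dag U) (conj_mat U A) = A"
proof -
  have "conj_mat (dag U) (conj_mat U A) = (dag U * U) * A * (dag U * U)"
    unfolding conj_mat_def using assms(1,3) by (simp add: assoc_mult_mat[of _ N N _ N _ N])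
  then show ?thesis
    using assms by (simp del: assoc_mult_mat)
qed

lemma conj_mat_one [simp]: "A \<in> carrier_mat N N \<Longrightarrow> conj_mat (1\<^sub>m N) A = A"
  unfolding conj_mat_def by simp

lemma conj_mat_smult: "A \<in> carrier_mat N N \<Longrightarrow> U \<in> carrier_mat N N \<Longrightarrow> conj_mat U (c \<cdot>\<^sub>m A) = c \<cdot>\<^sub>m conj_mat U A"
  unfolding conj_mat_def by simp

lemma clifford_hierarchy_Suc_Suc [simp]:
  "W \<in> clifford_hierarchy n (Suc (Suc k)) \<longleftrightarrow>
   unitary_n n W \<and> (\<forall>P \<in> pauli_group n. conj_mat W P \<in> clifford_hierarchy n (Suc k))"
  by (simp add: conj_mat_def)

declare clifford_hierarchy.simps(3) [simp del]

lemma clifford_group_iff: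
  "W \<in> clifford_hierarchy n 2 \<longleftrightarrow> unitary_n n W \<and> (\<forall>P \<in> pauli_group n. conj_mat W P \<in> pauli_group n)"
  by (simp add: numeral_2_eq_2)

lemma hierarchy_level_cases [case_names 1 Suc_Suc]:
  assumes "W \<in> clifford_hierarchy n k"
  obtains "k = 1" | k' where "k = Suc (Suc k')"
  using assms by (cases "(n, k)" rule: clifford_hierarchy.cases) auto

lemma hierarchy_unitary: "W \<in> clifford_hierarchy n k \<Longrightarrow> unitary_n n W"
  by (cases rule: hierarchy_level_cases) (auto simp: pauli_group_unitary)

lemma hierarchy_carrier_mat: "W \<in> clifford_hierarchy n k \<Longrightarrow> W \<in> carrier_mat (2 ^ n) (2 ^ n)"
  using hierarchy_unitary unitary_nD(1) by blast

lemma hierarchy_level_pos: "W \<in> clifford_hierarchy n k \<Longrightarrow> 0 < k"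
  by (cases rule: hierarchy_level_cases) auto

lemma conj_mat_pauli_group:
  "P \<in> pauli_group n \<Longrightarrow> Q \<in> pauli_group n \<Longrightarrow> conj_mat P Q \<in> pauli_group n"
  unfolding conj_mat_def by (intro pauli_group_mult pauli_group_dag)

lemma hierarchy_mono:
  assumes "W \<in> clifford_hierarchy n k"
  shows "W \<in> clifford_hierarchy n (Suc k)"
  using hierarchy_level_pos[OF assms] assms
proof (induction k arbitrary: W rule: nat_induct_non_zero)
  case 1
  then show ?case
    by (simp add: pauli_group_unitary conj_mat_pauli_group)
next
  case (Suc k)
  then obtain k' where "k = Suc k'"
    using gr0_conv_Suc by blast
  with Suc show ?case
    by simp
qed

lemma pauli_group_subset_clifford: "P \<in> pauli_group n \<Longrightarrow> P \<in> clifford_hierarchy n 2"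
  using hierarchy_mono[of P n 1] by (simp add: numeral_2_eq_2)

lemma clifford_subset_hierarchy: "2 \<le> k \<Longrightarrow> W \<in> clifford_hierarchy n 2 \<Longrightarrow> W \<in> clifford_hierarchy n k"
  by (induction k rule: dec_induct) (auto intro: hierarchy_mono)

lemma clifford_mult:
  assumes "C \<in> clifford_hierarchy n 2" "D \<in> clifford_hierarchy n 2"
  shows "C * D \<in> clifford_hierarchy n 2"
proof -
  have "conj_mat (C * D) P = conj_mat C (conj_mat D P)" if "P \<in> pauli_group n" for P
    using conj_mat_mult hierarchy_carrier_mat assms pauli_group_carrier_mat[OF that] by blast
  then show ?thesis
    using assms unfolding clifford_group_iff by (simp add: unitary_n_mult)
qed

(* Conjugation by a Clifford unitary maps the finite Pauli group injectively, hence onto itself. *)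
lemma clifford_dag:
  assumes "C \<in> clifford_hierarchy n 2"
  shows "dag C \<in> clifford_hierarchy n 2"
proof -
  have C: "unitary_n n C" "conj_mat C ` pauli_group n \<subseteq> pauli_group n"
    using assms unfolding clifford_group_iff by auto
  note cancel = conj_mat_dag_cancel[OF unitary_nD(1,3)[OF C(1)] pauli_group_carrier_mat]
  have "inj_on (conj_mat C) (pauli_group n)"
    by (metis cancel inj_onI)
  then have onto: "conj_mat C ` pauli_group n = pauli_group n"
    using endo_inj_surj[OF finite_pauli_group C(2)] by blast
  have "conj_mat (dag C) R \<in> pauli_group n" if "R \<in> pauli_group n" for R
    using that cancel by (metis imageE onto)
  then show ?thesis
    using unitary_n_dag[OF C(1)] unfolding clifford_group_iff by blast
qed

lemma hierarchy_conj_clifford: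
  assumes "C \<in> clifford_hierarchy n 2" "W \<in> clifford_hierarchy n k"
  shows "conj_mat C W \<in> clifford_hierarchy n k"
  using hierarchy_level_pos[OF assms(2)] assms(2)
proof (induction k arbitrary: W rule: nat_induct_non_zero)
  case 1
  then show ?case
    using assms(1) by (simp add: clifford_group_iff)
next
  case (Suc k W)
  let ?N = "2 ^ n :: nat"
  obtain k' where k: "k = Suc k'"
    using Suc.hyps gr0_conv_Suc by blast
  have C: "unitary_n n C" "unitary_n n (dag C)"
    using assms(1) clifford_dag[OF assms(1)] unfolding clifford_group_iff by auto
  have W: "unitary_n n W" "\<forall>P \<in> pauli_group n. conj_mat W P \<in> clifford_hierarchy n k"
    using Suc.prems k by auto
  have "conj_mat (conj_mat C W) R = conj_mat C (conj_mat W (conj_mat (dag C) R))"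
    if "R \<in> pauli_group n" for R
    using unitary_nD(1)[OF C(1)] unitary_nD(1)[OF W(1)] pauli_group_carrier_mat[OF that]
    unfolding conj_mat_def[of C W] by (simp add: conj_mat_mult[of _ ?N])
  moreover have "conj_mat (dag C) R \<in> pauli_group n" if "R \<in> pauli_group n" for R
    using clifford_dag[OF assms(1)] that unfolding clifford_group_iff by auto
  moreover have "unitary_n n (conj_mat C W)"
    unfolding conj_mat_def using C W(1) by (intro unitary_n_mult)
  ultimately show ?case
    using W(2) Suc.IH k by simp
qed

lemma hierarchy_conj_pauli_iff:
  assumes "P \<in> pauli_group n" "W \<in> carrier_mat (2 ^ n) (2 ^ n)"
  shows "conj_mat P W \<in> clifford_hierarchy n k \<longleftrightarrow> W \<in> clifford_hierarchy n k"
proof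
  show "conj_mat P W \<in> clifford_hierarchy n k" if "W \<in> clifford_hierarchy n k"
    using hierarchy_conj_clifford[OF pauli_group_subset_clifford[OF assms(1)] that] .
  assume "conj_mat P W \<in> clifford_hierarchy n k"
  then have "conj_mat (dag P) (conj_mat P W) \<in> clifford_hierarchy n k"
    using hierarchy_conj_clifford[OF pauli_group_subset_clifford[OF pauli_group_dag[OF assms(1)]]] by blast
  then show "W \<in> clifford_hierarchy n k"
    using conj_mat_dag_cancel unitary_nD[OF pauli_group_unitary[OF assms(1)]] assms(2) by metis
qed

lemma hierarchy_mult_pauli_left:
  assumes "P \<in> pauli_group n" "W \<in> clifford_hierarchy n k"
  shows "P * W \<in> clifford_hierarchy n k"
  using assms(2)
proof (cases rule: hierarchy_level_cases)
  case 1
  then show ?thesis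
    using assms pauli_group_mult by simp
next
  case (Suc_Suc k')
  have "conj_mat (P * W) R = conj_mat P (conj_mat W R)" if "R \<in> pauli_group n" for R
    using conj_mat_mult pauli_group_carrier_mat[OF assms(1)] pauli_group_carrier_mat[OF that]
      hierarchy_carrier_mat[OF assms(2)] by blast
  then show ?thesis
    using assms(1,2) Suc_Suc hierarchy_conj_clifford[OF pauli_group_subset_clifford[OF assms(1)]]
    by (simp add: unitary_n_mult pauli_group_unitary)
qed

lemma hierarchy_mult_pauli_right:
  assumes "P \<in> pauli_group n" "W \<in> clifford_hierarchy n k"
  shows "W * P \<in> clifford_hierarchy n k"
  using assms(2)
proof (cases rule: hierarchy_level_cases)
  case 1
  then show ?thesis
    using assms pauli_group_mult by simp
next
  case (Suc_Suc k')
  have "conj_mat (W * P) R = conj_mat W (conj_mat P R)" if "R \<in> pauli_group n" for R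
    using conj_mat_mult pauli_group_carrier_mat[OF assms(1)] pauli_group_carrier_mat[OF that]
      hierarchy_carrier_mat[OF assms(2)] by blast
  then show ?thesis
    using assms(1,2) Suc_Suc conj_mat_pauli_group[OF assms(1)]
    by (simp add: unitary_n_mult pauli_group_unitary)
qed

lemma hierarchy_mult_commuting_clifford:
  assumes "C \<in> clifford_hierarchy n 2" "W \<in> clifford_hierarchy n k" "2 \<le> k" "C * W = W * C"
  shows "C * W \<in> clifford_hierarchy n k"
proof -
  obtain k' where k: "k = Suc (Suc k')"
    using assms(3) by (metis add_2_eq_Suc le_Suc_ex)
  have "conj_mat (C * W) R = conj_mat W (conj_mat C R)" if "R \<in> pauli_group n" for R
    unfolding assms(4)
    using conj_mat_mult hierarchy_carrier_mat[OF assms(1)] hierarchy_carrier_mat[OF assms(2)]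
      pauli_group_carrier_mat[OF that] by blast
  then show ?thesis
    using assms(1,2) unfolding k clifford_group_iff by (simp add: unitary_n_mult)
qed

lemma hierarchy_mult_commuting_clifford_iff:
  assumes "C \<in> clifford_hierarchy n 2" "W \<in> carrier_mat (2 ^ n) (2 ^ n)" "2 \<le> k" "C * W = W * C"
  shows "C * W \<in> clifford_hierarchy n k \<longleftrightarrow> W \<in> clifford_hierarchy n k"
proof
  let ?N = "2 ^ n :: nat"
  have C: "C \<in> carrier_mat ?N ?N" "C * dag C = 1\<^sub>m ?N" "dag C * C = 1\<^sub>m ?N"
    using unitary_nD hierarchy_unitary[OF assms(1)] by auto
  have cancel: "dag C * (C * W) = W"
    using C assms(2) by (simp flip: assoc_mult_mat[of _ ?N ?N _ ?N _ ?N])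
  moreover have "C * W * dag C = W"
    using C assms(2) by (simp add: assms(4) assoc_mult_mat[of _ ?N ?N _ ?N _ ?N])
  ultimately have "dag C * (C * W) = C * W * dag C"
    by simp
  moreover assume "C * W \<in> clifford_hierarchy n k"
  ultimately have "dag C * (C * W) \<in> clifford_hierarchy n k"
    using hierarchy_mult_commuting_clifford[OF clifford_dag[OF assms(1)] _ assms(3)] by blast
  then show "W \<in> clifford_hierarchy n k"
    unfolding cancel .
qed (use hierarchy_mult_commuting_clifford assms in blast)

section \<open>Block matrices on one more qubit\<close>

definition block_diag :: "complex mat \<Rightarrow> complex mat \<Rightarrow> complex mat" where
  "block_diag A B = four_block_mat A (0\<^sub>m (dim_row A) (dim_col B)) (0\<^sub>m (dim_row B) (dim_col A)) B"

definition X_control :: "nat \<Rightarrow> complex mat" where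
  "X_control N = four_block_mat (0\<^sub>m N N) (1\<^sub>m N) (1\<^sub>m N) (0\<^sub>m N N)"

lemma dim_block_diag [simp]:
  "dim_row (block_diag A B) = dim_row A + dim_row B" "dim_col (block_diag A B) = dim_col A + dim_col B"
  unfolding block_diag_def by auto

lemma block_diag_carrier_mat [simp]:
  "A \<in> carrier_mat N N \<Longrightarrow> B \<in> carrier_mat N N \<Longrightarrow> block_diag A B \<in> carrier_mat (2 * N) (2 * N)"
  unfolding block_diag_def mult_2 by auto

lemma X_control_carrier_mat [simp]: "X_control N \<in> carrier_mat (2 * N) (2 * N)"
  unfolding X_control_def mult_2 by auto

lemma dim_X_control [simp]: "dim_row (X_control N) = 2 * N" "dim_col (X_control N) = 2 * N"
  using X_control_carrier_mat by blast+

lemma block_diag_mult: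
  assumes "A \<in> carrier_mat N N" "B \<in> carrier_mat N N" "C \<in> carrier_mat N N" "D \<in> carrier_mat N N"
  shows "block_diag A B * block_diag C D = block_diag (A * C) (B * D)"
  unfolding block_diag_def using assms
  by (subst mult_four_block_mat[of _ N N _ N _ N _ _ N _ N]) auto

lemma block_diag_mult_X_control:
  assumes "A \<in> carrier_mat N N" "B \<in> carrier_mat N N"
  shows "block_diag A B * X_control N = X_control N * block_diag B A"
  unfolding block_diag_def X_control_def using assms
  by (simp add: mult_four_block_mat[of _ N N _ N _ N _ _ N _ N])

lemma X_control_mult_self: "X_control N * X_control N = 1\<^sub>m (2 * N)"
  unfolding X_control_def mult_2
  by (simp add: mult_four_block_mat[of _ N N _ N _ N _ _ N _ N])

lemma dag_block_diag:
  assumes "A \<in> carrier_mat N N" "B \<in> carrier_mat N N"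
  shows "dag (block_diag A B) = block_diag (dag A) (dag B)"
  unfolding block_diag_def using assms by (subst dag_four_block_mat[of _ N N]) auto

lemma dag_X_control [simp]: "dag (X_control N) = X_control N"
  unfolding X_control_def by (subst dag_four_block_mat[of _ N N]) auto

lemma block_diag_one [simp]: "block_diag (1\<^sub>m N) (1\<^sub>m N) = 1\<^sub>m (2 * N)"
  unfolding block_diag_def mult_2 by simp

lemma block_diag_upper_left_eq:
  assumes "A \<in> carrier_mat N N" "B \<in> carrier_mat N N" "C \<in> carrier_mat N N" "D \<in> carrier_mat N N"
    and "block_diag A B = block_diag C D"
  shows "A = C"
proof (rule eq_matI)
  fix i j
  assume "i < dim_row C" "j < dim_col C"
  then show "A $$ (i, j) = C $$ (i, j)"
    using assms(1-4) arg_cong[OF assms(5), of "\<lambda>M. M $$ (i, j)"] unfolding block_diag_def by auto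
qed (use assms in auto)

lemma X_control_mult_block_diag:
  assumes "C \<in> carrier_mat N N" "D \<in> carrier_mat N N"
  shows "X_control N * block_diag C D = four_block_mat (0\<^sub>m N N) D C (0\<^sub>m N N)"
  unfolding block_diag_def X_control_def using assms
  by (simp add: mult_four_block_mat[of _ N N _ N _ N _ _ N _ N])

lemma block_diag_eq_X_control_mult:
  assumes "A \<in> carrier_mat N N" "B \<in> carrier_mat N N" "C \<in> carrier_mat N N" "D \<in> carrier_mat N N"
    and "block_diag A B = X_control N * block_diag C D"
  shows "A = 0\<^sub>m N N"
proof (rule eq_matI)
  fix i j
  assume "i < dim_row (0\<^sub>m N N :: complex mat)" "j < dim_col (0\<^sub>m N N :: complex mat)"
  then show "A $$ (i, j) = 0\<^sub>m N N $$ (i, j)"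
    using assms(1-4) X_control_mult_block_diag[OF assms(3,4)] arg_cong[OF assms(5), of "\<lambda>M. M $$ (i, j)"]
    unfolding block_diag_def by auto
qed (use assms in auto)

lemma controlled_eq_block_diag: "U \<in> carrier_mat N N \<Longrightarrow> controlled U = block_diag (1\<^sub>m N) U"
  unfolding controlled_def block_diag_def by auto

lemma unitary_block_diag:
  assumes "unitary_n n A" "unitary_n n B"
  shows "unitary_n (Suc n) (block_diag A B)"
  using unitary_nD[OF assms(1)] unitary_nD[OF assms(2)]
  unfolding unitary_n_def by (simp add: dag_block_diag block_diag_mult[of _ "2 ^ n"])

lemma conj_block_diag:
  assumes "A \<in> carrier_mat N N" "B \<in> carrier_mat N N" "C \<in> carrier_mat N N" "D \<in> carrier_mat N N"
  shows "conj_mat (block_diag A B) (block_diag C D) = block_diag (conj_mat A C) (conj_mat B D)"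
  unfolding conj_mat_def using assms by (simp add: dag_block_diag block_diag_mult[of _ N])

lemma conj_block_diag_X_control:
  assumes "A \<in> carrier_mat N N" "B \<in> carrier_mat N N"
  shows "conj_mat (block_diag A B) (X_control N) = X_control N * block_diag (B * dag A) (A * dag B)"
  unfolding conj_mat_def using assms
  by (simp add: dag_block_diag block_diag_mult_X_control block_diag_mult[of _ N]
      assoc_mult_mat[of _ "2 * N" "2 * N" _ "2 * N" _ "2 * N"])

lemma conj_X_control_block_diag:
  assumes "A \<in> carrier_mat N N" "B \<in> carrier_mat N N"
  shows "conj_mat (X_control N) (block_diag A B) = block_diag B A"
proof -
  note assoc = assoc_mult_mat[of _ "2 * N" "2 * N" _ "2 * N" _ "2 * N"]
  have "conj_mat (X_control N) (block_diag A B) = X_control N * (X_control N * block_diag B A)"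
    unfolding conj_mat_def using assms by (simp add: assoc block_diag_mult_X_control)
  also have "\<dots> = block_diag B A"
    using assms by (simp add: X_control_mult_self flip: assoc)
  finally show ?thesis .
qed

lemma kron_pauli1_block:
  assumes "Q \<in> carrier_mat N N"
  shows "kron (pauli1 0) Q = block_diag Q Q"
    and "kron (pauli1 1) Q = X_control N * block_diag Q Q"
    and "kron (pauli1 2) Q = X_control N * block_diag (\<i> \<cdot>\<^sub>m Q) ((- \<i>) \<cdot>\<^sub>m Q)"
    and "kron (pauli1 3) Q = block_diag Q ((- 1) \<cdot>\<^sub>m Q)"
  using assms
  by (simp_all add: kron_2_four_block[OF pauli1_carrier_mat assms] X_control_mult_block_diag
      pauli1_entry_def zero_smult_mat) (simp_all add: block_diag_def)

lemma pauli_group_Suc_cases: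
  assumes "P \<in> pauli_group (Suc n)"
  obtains Q s where "Q \<in> pauli_group n" "s \<in> {1, -1}" "P = block_diag Q (s \<cdot>\<^sub>m Q)"
    | Q s where "Q \<in> pauli_group n" "s \<in> {1, -1}" "P = X_control (2 ^ n) * block_diag Q (s \<cdot>\<^sub>m Q)"
proof -
  obtain a Q where a: "a < 4" and Q: "Q \<in> pauli_group n" and P: "P = kron (pauli1 a) Q"
    using assms unfolding pauli_group_Suc by blast
  note blocks = kron_pauli1_block[OF pauli_group_carrier_mat[OF Q]]
  have iQ: "\<i> \<cdot>\<^sub>m Q \<in> pauli_group n"
    using pauli_group_smult[OF _ Q] by simp
  from a show ?thesis
    unfolding less_4_cases
  proof (elim disjE)
    assume "a = 0"
    then show ?thesis
      using that(1)[OF Q, of 1] unfolding P \<open>a = 0\<close> blocks by simp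
  next
    assume "a = 1"
    then show ?thesis
      using that(2)[OF Q, of 1] unfolding P \<open>a = 1\<close> blocks by simp
  next
    assume "a = 2"
    then show ?thesis
      using that(2)[OF iQ, of "-1"] unfolding P \<open>a = 2\<close> blocks by simp
  next
    assume "a = 3"
    then show ?thesis
      using that(1)[OF Q, of "-1"] unfolding P \<open>a = 3\<close> blocks by simp
  qed
qed

lemma block_diag_pauli:
  assumes "Q \<in> pauli_group n" "s \<in> {1, -1}"
  shows "block_diag Q (s \<cdot>\<^sub>m Q) \<in> pauli_group (Suc n)"
proof -
  have "block_diag Q (s \<cdot>\<^sub>m Q) = kron (pauli1 (if s = 1 then 0 else 3)) Q"
    using assms kron_pauli1_block[OF pauli_group_carrier_mat[OF assms(1)]] by auto
  then show ?thesis
    unfolding pauli_group_Suc using assms(1)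
    by (intro exI[of _ "if s = 1 then 0 else 3"] conjI bexI[of _ Q]) auto
qed

lemma X_control_pauli: "X_control (2 ^ n) \<in> pauli_group (Suc n)"
  using one_in_pauli_group[of n] kron_pauli1_block(2)[of "1\<^sub>m (2 ^ n)" "2 ^ n"]
  unfolding pauli_group_Suc by (intro exI[of _ 1] conjI bexI[of _ "1\<^sub>m (2 ^ n)"]) auto

lemma conj_mat_pauli_sign:
  assumes "R \<in> pauli_group n" "Q \<in> pauli_group n"
  shows "\<exists>u \<in> {1, -1}. conj_mat R Q = u \<cdot>\<^sub>m Q"
proof -
  let ?N = "2 ^ n :: nat"
  obtain u where u: "u \<in> {1, -1}" "R * Q = u \<cdot>\<^sub>m (Q * R)"
    using pauli_group_commute_sign[OF assms] by blast
  have "conj_mat R Q = u \<cdot>\<^sub>m (Q * (R * dag R))"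
    unfolding conj_mat_def
    using u pauli_group_carrier_mat[OF assms(1)] pauli_group_carrier_mat[OF assms(2)]
    by (simp add: assoc_mult_mat[of _ ?N ?N _ ?N _ ?N])
  then show ?thesis
    using u unitary_nD[OF pauli_group_unitary[OF assms(1)]] pauli_group_carrier_mat[OF assms(2)] by auto
qed

lemma clifford_SucI:
  assumes W: "unitary_n (Suc n) W"
    and X: "conj_mat W (X_control (2 ^ n)) \<in> pauli_group (Suc n)"
    and Z: "\<And>Q s. Q \<in> pauli_group n \<Longrightarrow> s \<in> {1, -1} \<Longrightarrow>
              conj_mat W (block_diag Q (s \<cdot>\<^sub>m Q)) \<in> pauli_group (Suc n)"
  shows "W \<in> clifford_hierarchy (Suc n) 2"
proof -
  have "conj_mat W P \<in> pauli_group (Suc n)" if "P \<in> pauli_group (Suc n)" for P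
    using that
  proof (cases rule: pauli_group_Suc_cases)
    case (2 Q s)
    have "conj_mat W P = conj_mat W (X_control (2 ^ n)) * conj_mat W (block_diag Q (s \<cdot>\<^sub>m Q))"
      unfolding 2(3) using unitary_nD[OF W] pauli_group_carrier_mat[OF 2(1)]
      by (intro conj_mat_mult_distrib) auto
    then show ?thesis
      using X Z[OF 2(1,2)] by (simp add: pauli_group_mult)
  qed (use Z in simp)
  then show ?thesis
    using W unfolding clifford_group_iff by blast
qed

lemma controlled_pauli_clifford:
  assumes R: "R \<in> pauli_group n"
  shows "controlled R \<in> clifford_hierarchy (Suc n) 2"
proof (rule clifford_SucI)
  let ?N = "2 ^ n :: nat"
  have Rc: "R \<in> carrier_mat ?N ?N"
    using pauli_group_carrier_mat[OF R] .
  then show "unitary_n (Suc n) (controlled R)"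
    using unitary_block_diag[OF pauli_group_unitary[OF one_in_pauli_group] pauli_group_unitary[OF R]]
    by (simp add: controlled_eq_block_diag)
  obtain t where "t \<in> {1, -1}" "dag R = t \<cdot>\<^sub>m R"
    using pauli_group_dag_sign[OF R] by blast
  then show "conj_mat (controlled R) (X_control ?N) \<in> pauli_group (Suc n)"
    using Rc by (simp add: controlled_eq_block_diag conj_block_diag_X_control
        pauli_group_mult[OF X_control_pauli block_diag_pauli[OF R]])
  fix Q and s :: complex
  assume Q: "Q \<in> pauli_group n" and s: "s \<in> {1, -1}"
  obtain u where "u \<in> {1, -1}" "conj_mat R Q = u \<cdot>\<^sub>m Q"
    using conj_mat_pauli_sign[OF R Q] by blast
  moreover have "s * u \<in> {1, -1}"
    using s \<open>u \<in> {1, -1}\<close> by auto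
  ultimately show "conj_mat (controlled R) (block_diag Q (s \<cdot>\<^sub>m Q)) \<in> pauli_group (Suc n)"
    using Rc pauli_group_carrier_mat[OF Q] block_diag_pauli[OF Q]
    by (simp add: controlled_eq_block_diag conj_block_diag[of _ ?N] conj_mat_smult)
qed

lemma block_diag_self_clifford:
  assumes V: "V \<in> clifford_hierarchy n 2"
  shows "block_diag V V \<in> clifford_hierarchy (Suc n) 2"
proof (rule clifford_SucI)
  let ?N = "2 ^ n :: nat"
  have V': "unitary_n n V" "\<forall>P \<in> pauli_group n. conj_mat V P \<in> pauli_group n"
    using V unfolding clifford_group_iff by auto
  then show "unitary_n (Suc n) (block_diag V V)"
    using unitary_block_diag by blast
  show "conj_mat (block_diag V V) (X_control ?N) \<in> pauli_group (Suc n)"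
    using unitary_nD[OF V'(1)] X_control_pauli
    by (simp add: conj_block_diag_X_control)
  fix Q and s :: complex
  assume Q: "Q \<in> pauli_group n" and "s \<in> {1, -1}"
  then show "conj_mat (block_diag V V) (block_diag Q (s \<cdot>\<^sub>m Q)) \<in> pauli_group (Suc n)"
    using unitary_nD(1)[OF V'(1)] pauli_group_carrier_mat[OF Q] V'(2) block_diag_pauli
    by (simp add: conj_block_diag[of _ ?N] conj_mat_smult)
qed

lemma block_diag_pauli_clifford:
  assumes Q1: "Q1 \<in> pauli_group n" and Q2: "Q2 \<in> pauli_group n"
  shows "block_diag Q1 Q2 \<in> clifford_hierarchy (Suc n) 2"
proof -
  let ?N = "2 ^ n :: nat"
  have c: "Q1 \<in> carrier_mat ?N ?N" "Q2 \<in> carrier_mat ?N ?N" "Q1 * dag Q1 = 1\<^sub>m ?N"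
    using pauli_group_carrier_mat Q1 Q2 unitary_nD[OF pauli_group_unitary[OF Q1]] by auto
  have "Q1 * (dag Q1 * Q2) = Q2"
    using c by (simp flip: assoc_mult_mat[of _ ?N ?N _ ?N _ ?N])
  then have "block_diag Q1 (1 \<cdot>\<^sub>m Q1) * controlled (dag Q1 * Q2) = block_diag Q1 Q2"
    using c by (simp add: controlled_eq_block_diag[of _ ?N] block_diag_mult[of _ ?N])
  then show ?thesis
    using hierarchy_mult_pauli_left[OF block_diag_pauli[OF Q1 insertI1]
        controlled_pauli_clifford[OF pauli_group_mult[OF pauli_group_dag[OF Q1] Q2]]] by simp
qed

section \<open>Controlled Clifford gates\<close>

lemma conj_controlled_X_control:
  "V \<in> carrier_mat N N \<Longrightarrow> conj_mat (controlled V) (X_control N) = X_control N * block_diag V (dag V)"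
  by (simp add: controlled_eq_block_diag conj_block_diag_X_control)

lemma controlled_hierarchy_imp_block_diag:
  assumes V: "unitary_n n V" and CV: "controlled V \<in> clifford_hierarchy (Suc n) (Suc k)" and k: "0 < k"
  shows "block_diag V (dag V) \<in> clifford_hierarchy (Suc n) k"
proof -
  let ?X = "X_control (2 ^ n)"
  obtain k' where k': "k = Suc k'"
    using k gr0_conv_Suc by blast
  have "conj_mat (controlled V) ?X \<in> clifford_hierarchy (Suc n) k"
    using CV X_control_pauli by (simp add: k')
  then have "?X * block_diag V (dag V) \<in> clifford_hierarchy (Suc n) k"
    using unitary_nD(1)[OF V] by (simp add: conj_controlled_X_control)
  then have "?X * (?X * block_diag V (dag V)) \<in> clifford_hierarchy (Suc n) k"
    by (rule hierarchy_mult_pauli_left[OF X_control_pauli])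
  then show ?thesis
    using unitary_nD(1)[OF V] X_control_mult_self
    by (simp flip: assoc_mult_mat[of _ "2 * 2 ^ n" "2 * 2 ^ n" _ "2 * 2 ^ n" _ "2 * 2 ^ n"])
qed

lemma block_diag_dag_hierarchy_iff_controlled_square:
  assumes V: "V \<in> clifford_hierarchy n 2" and k: "2 \<le> k"
  shows "block_diag V (dag V) \<in> clifford_hierarchy (Suc n) k \<longleftrightarrow>
         controlled (V * V) \<in> clifford_hierarchy (Suc n) k"
proof -
  let ?N = "2 ^ n :: nat"
  have Vc: "V \<in> carrier_mat ?N ?N" "V * dag V = 1\<^sub>m ?N" "dag V * V = 1\<^sub>m ?N"
    using unitary_nD hierarchy_unitary[OF V] by auto
  have square: "block_diag V V * block_diag V (dag V) = block_diag (V * V) (1\<^sub>m ?N)"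
    and commute: "block_diag V V * block_diag V (dag V) = block_diag V (dag V) * block_diag V V"
    using Vc by (simp_all add: block_diag_mult[of _ ?N])
  have "controlled (V * V) = conj_mat (X_control ?N) (block_diag (V * V) (1\<^sub>m ?N))"
    using Vc by (simp add: controlled_eq_block_diag conj_X_control_block_diag)
  then have "controlled (V * V) \<in> clifford_hierarchy (Suc n) k \<longleftrightarrow>
             block_diag (V * V) (1\<^sub>m ?N) \<in> clifford_hierarchy (Suc n) k"
    using Vc by (simp add: hierarchy_conj_pauli_iff[OF X_control_pauli])
  also have "\<dots> \<longleftrightarrow> block_diag V (dag V) \<in> clifford_hierarchy (Suc n) k"
    using hierarchy_mult_commuting_clifford_iff[OF block_diag_self_clifford[OF V] _ k commute] Vc
    by (simp add: square)
  finally show ?thesis ..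
qed

(* Up to Paulis on either side, conjugating a Pauli with an X on the control qubit by CV
   gives the conjugate of diag(V, V^dagger) by a controlled Pauli CQ. *)
lemma conj_controlled_X_control_block_diag:
  assumes V: "unitary_n n V" and Q: "Q \<in> pauli_group n"
  shows "conj_mat (controlled V) (X_control (2 ^ n) * block_diag Q (s \<cdot>\<^sub>m Q)) =
         X_control (2 ^ n) * block_diag (1\<^sub>m (2 ^ n)) (s \<cdot>\<^sub>m 1\<^sub>m (2 ^ n)) *
         conj_mat (controlled Q) (block_diag V (dag V)) * block_diag Q Q"
proof -
  let ?N = "2 ^ n :: nat" and ?X = "X_control (2 ^ n)"
  have Vc: "V \<in> carrier_mat ?N ?N" "V * dag V = 1\<^sub>m ?N" "dag V * V = 1\<^sub>m ?N"
    using unitary_nD[OF V] by auto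
  have Qc: "Q \<in> carrier_mat ?N ?N" "dag Q * Q = 1\<^sub>m ?N"
    using unitary_nD[OF pauli_group_unitary[OF Q]] by auto
  note assoc = assoc_mult_mat[of _ ?N ?N _ ?N _ ?N] assoc_mult_mat[of _ "2 * ?N" "2 * ?N" _ "2 * ?N" _ "2 * ?N"]
  have "conj_mat (controlled V) (?X * block_diag Q (s \<cdot>\<^sub>m Q)) =
        conj_mat (controlled V) ?X * conj_mat (controlled V) (block_diag Q (s \<cdot>\<^sub>m Q))"
    using Vc Qc unitary_nD(1,3)[OF unitary_block_diag[OF pauli_group_unitary[OF one_in_pauli_group] V]]
    by (intro conj_mat_mult_distrib) (auto simp: controlled_eq_block_diag)
  also have "\<dots> = ?X * block_diag (V * Q) (s \<cdot>\<^sub>m (Q * dag V))"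
    using Vc Qc unitary_n_cancel[OF V]
    by (simp add: controlled_eq_block_diag[OF Vc(1)] conj_block_diag_X_control[of "1\<^sub>m ?N" ?N V]
        conj_block_diag[of "1\<^sub>m ?N" ?N V])
      (simp add: conj_mat_def block_diag_mult[of _ ?N] assoc)
  also have "\<dots> = ?X * block_diag (1\<^sub>m ?N) (s \<cdot>\<^sub>m 1\<^sub>m ?N) *
                  conj_mat (controlled Q) (block_diag V (dag V)) * block_diag Q Q"
    using Vc Qc
    by (simp add: controlled_eq_block_diag[OF Qc(1)] conj_block_diag[of "1\<^sub>m ?N" ?N Q])
      (simp add: conj_mat_def block_diag_mult[of _ ?N] assoc)
  finally show ?thesis .
qed

lemma block_diag_dag_imp_controlled_hierarchy:
  assumes V: "V \<in> clifford_hierarchy n 2" and k: "2 \<le> k"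
    and D: "block_diag V (dag V) \<in> clifford_hierarchy (Suc n) k"
  shows "controlled V \<in> clifford_hierarchy (Suc n) (Suc k)"
proof -
  let ?N = "2 ^ n :: nat"
  obtain k' where k': "k = Suc k'"
    using k by (cases k) auto
  have V': "unitary_n n V" "\<forall>P \<in> pauli_group n. conj_mat V P \<in> pauli_group n"
    using V unfolding clifford_group_iff by auto
  have "conj_mat (controlled V) P \<in> clifford_hierarchy (Suc n) k" if "P \<in> pauli_group (Suc n)" for P
    using that
  proof (cases rule: pauli_group_Suc_cases)
    case (1 Q s)
    then have "conj_mat (controlled V) P = block_diag Q (s \<cdot>\<^sub>m conj_mat V Q)"
      using unitary_nD(1)[OF V'(1)] pauli_group_carrier_mat[OF 1(1)]
      by (simp add: controlled_eq_block_diag conj_block_diag[of _ ?N] conj_mat_smult)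
    moreover have "s \<cdot>\<^sub>m conj_mat V Q \<in> pauli_group n"
      using 1 V'(2) pauli_group_sign by blast
    ultimately show ?thesis
      using clifford_subset_hierarchy[OF k block_diag_pauli_clifford[OF 1(1)]] by simp
  next
    case (2 Q s)
    have "X_control ?N * block_diag (1\<^sub>m ?N) (s \<cdot>\<^sub>m 1\<^sub>m ?N) \<in> pauli_group (Suc n)"
      using pauli_group_mult[OF X_control_pauli block_diag_pauli[OF one_in_pauli_group 2(2)]] .
    moreover have "conj_mat (controlled Q) (block_diag V (dag V)) \<in> clifford_hierarchy (Suc n) k"
      using hierarchy_conj_clifford[OF controlled_pauli_clifford[OF 2(1)] D] .
    ultimately show ?thesis
      unfolding 2(3) conj_controlled_X_control_block_diag[OF V'(1) 2(1)]
      using hierarchy_mult_pauli_right[OF block_diag_pauli[OF 2(1) insertI1]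
          hierarchy_mult_pauli_left]
      by simp
  qed
  then show ?thesis
    using unitary_block_diag[OF pauli_group_unitary[OF one_in_pauli_group] V'(1)]
      unitary_nD(1)[OF V'(1)]
    by (simp add: k' controlled_eq_block_diag)
qed

lemma controlled_hierarchy_Suc_iff:
  assumes "V \<in> clifford_hierarchy n 2" "2 \<le> k"
  shows "controlled V \<in> clifford_hierarchy (Suc n) (Suc k) \<longleftrightarrow>
         controlled (V * V) \<in> clifford_hierarchy (Suc n) k"
  using block_diag_dag_hierarchy_iff_controlled_square[OF assms]
    controlled_hierarchy_imp_block_diag[OF hierarchy_unitary[OF assms(1)]]
    block_diag_dag_imp_controlled_hierarchy[OF assms] assms(2)
  by auto

lemma controlled_clifford_iff:
  assumes V: "V \<in> clifford_hierarchy n 2"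
  shows "controlled V \<in> clifford_hierarchy (Suc n) 2 \<longleftrightarrow> V \<in> pauli_group n"
proof
  let ?N = "2 ^ n :: nat"
  have Vc: "V \<in> carrier_mat ?N ?N" "V * dag V = 1\<^sub>m ?N"
    using unitary_nD hierarchy_unitary[OF V] by auto
  assume "controlled V \<in> clifford_hierarchy (Suc n) 2"
  then have "controlled V \<in> clifford_hierarchy (Suc n) (Suc 1)"
    by (simp only: Suc_1)
  then have "block_diag V (dag V) \<in> clifford_hierarchy (Suc n) 1"
    by (rule controlled_hierarchy_imp_block_diag[OF hierarchy_unitary[OF V]]) simp
  then have D: "block_diag V (dag V) \<in> pauli_group (Suc n)"
    by simp
  have "V \<noteq> 0\<^sub>m ?N ?N"
  proof
    assume "V = 0\<^sub>m ?N ?N"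
    then have "(1\<^sub>m ?N :: complex mat) $$ (0, 0) = 0\<^sub>m ?N ?N $$ (0, 0)"
      using Vc(2) by simp
    then show False
      by simp
  qed
  with D show "V \<in> pauli_group n"
  proof (cases rule: pauli_group_Suc_cases)
    case (1 Q s)
    then show ?thesis
      using block_diag_upper_left_eq[of V ?N "dag V" Q "s \<cdot>\<^sub>m Q"] Vc pauli_group_carrier_mat by auto
  next
    case (2 Q s)
    then show ?thesis
      using block_diag_eq_X_control_mult[of V ?N "dag V" Q "s \<cdot>\<^sub>m Q"] Vc pauli_group_carrier_mat
        \<open>V \<noteq> 0\<^sub>m ?N ?N\<close> by auto
  qed
qed (rule controlled_pauli_clifford)

lemma pow_mat_double: "A \<in> carrier_mat N N \<Longrightarrow> A ^\<^sub>m (2 * k) = (A * A) ^\<^sub>m k"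
proof (induction k)
  case (Suc k)
  then have "A ^\<^sub>m (2 * Suc k) = (A * A) ^\<^sub>m k * A * A"
    by simp
  then show ?case
    using Suc.prems by (simp add: assoc_mult_mat[of _ N N _ N _ N])
qed simp

theorem controlled_hierarchy_iff_pow_pauli:
  assumes "V \<in> clifford_hierarchy n 2"
  shows "controlled V \<in> clifford_hierarchy (Suc n) (t + 2) \<longleftrightarrow> V ^\<^sub>m (2 ^ t) \<in> pauli_group n"
  using assms
proof (induction t arbitrary: V)
  case 0
  then have "V ^\<^sub>m (2 ^ 0) = V"
    using hierarchy_carrier_mat by simp
  then show ?case
    using controlled_clifford_iff[OF 0] by (simp only: add_0)
next
  case (Suc t)
  have "controlled V \<in> clifford_hierarchy (Suc n) (Suc t + 2) \<longleftrightarrow>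
        controlled (V * V) \<in> clifford_hierarchy (Suc n) (t + 2)"
    using controlled_hierarchy_Suc_iff[OF Suc.prems, of "t + 2"] by simp
  also have "\<dots> \<longleftrightarrow> V ^\<^sub>m (2 ^ Suc t) \<in> pauli_group n"
    using Suc.IH[OF clifford_mult[OF Suc.prems Suc.prems]]
      pow_mat_double[OF hierarchy_carrier_mat[OF Suc.prems]] by simp
  finally show ?case .
qed

theorem mainTheorem2:
  fixes n m :: nat and U :: "complex mat"
  assumes "n \<ge> 1"
    and "U \<in> clifford_hierarchy n 2"
    and "pauli_periodic n U"
    and "pauli_periodicity n U = m"
    and "m \<ge> 1"
  shows "controlled U \<in> clifford_hierarchy (n+1) (m+2) - clifford_hierarchy (n+1) (m+1)"
proof -
  have m: "m = (LEAST t. U ^\<^sub>m (2 ^ t) \<in> pauli_group n)"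
    using assms(4) unfolding pauli_periodicity_def by simp
  have "U ^\<^sub>m (2 ^ m) \<in> pauli_group n"
    using assms(3) unfolding pauli_periodic_def m by (rule LeastI_ex)
  then have in_level: "controlled U \<in> clifford_hierarchy (Suc n) (m + 2)"
    using controlled_hierarchy_iff_pow_pauli[OF assms(2)] by blast
  have "U ^\<^sub>m (2 ^ (m - 1)) \<notin> pauli_group n"
    using assms(5) unfolding m by (intro not_less_Least) simp
  then have not_in_level: "controlled U \<notin> clifford_hierarchy (Suc n) (m - 1 + 2)"
    using controlled_hierarchy_iff_pow_pauli[OF assms(2)] by blast
  have "m - 1 + 2 = m + 1"
    using assms(5) by simp
  then show ?thesis
    using in_level not_in_level unfolding Suc_eq_plus1 by simp
qed

end
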